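(* For every positive integer $n$, let $S_n$ be the tournament on vertex set $\{v_1,\ldots,v_n\}$ obtained as follows: start from the acyclic tournament in which, for all $1\le j<i\le n$, the edge between $v_i$ and $v_j$ is directed from $v_i$ to $v_j$ (so the out-neighbours of $v_i$ are $v_1,\ldots,v_{i-1}$), and then reverse the edges of the Hamiltonian path $v_n,v_{n-1},\ldots,v_1$ (i.e. for each $1\le i\le n-1$ the edge $v_{i+1}\to v_i$ is replaced by $v_i\to v_{i+1}$). Then $$P(S_n;x)=\sum_{i=1}^n\binom{i}{n-i}x(x-1)^{i-1}.$$
   Context: For a positive integer $k$, a proper $k$-coloring of a digraph $D$ is a map $c:V(D)\to\{1,\ldots,k\}$ such that each color class induces a subdigraph with no directed cycle. The number of proper $k$-colorings of $D$ is a polynomial in $k$, denoted $P(D;k)$ (the dichromatic polynomial). $\binom{i}{m}=0$ when $m>i$. *)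

theory Defs
  imports Main "HOL-Library.FuncSet"
begin

definition induced_arcs :: "('v \<times> 'v) set \<Rightarrow> 'v set \<Rightarrow> ('v \<times> 'v) set" where
  "induced_arcs A U = A \<inter> (U \<times> U)"

definition proper_coloring :: "'v set \<Rightarrow> ('v \<times> 'v) set \<Rightarrow> nat \<Rightarrow> ('v \<Rightarrow> nat) \<Rightarrow> bool" where
  "proper_coloring V A k c \<longleftrightarrow>
     c \<in> V \<rightarrow> {1..k} \<and>
     (\<forall>a \<in> {1..k}. acyclic (induced_arcs A {v \<in> V. c v = a}))"

text \<open>Number of proper k-colourings (maps are taken extensional outside V,
  so that they are counted as maps on V).\<close>
definition num_colorings :: "'v set \<Rightarrow> ('v \<times> 'v) set \<Rightarrow> nat \<Rightarrow> nat" where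
  "num_colorings V A k = card {c \<in> V \<rightarrow>\<^sub>E {1..k}. proper_coloring V A k c}"

text \<open>The tournament S_n on vertices 1..n (vertex i stands for v_i):
  arcs i -> j for j < i, except that the path arcs (j+1) -> j are reversed to j -> (j+1).\<close>
definition S_arcs :: "nat \<Rightarrow> (nat \<times> nat) set" where
  "S_arcs n = {(i, j). i \<in> {1..n} \<and> j \<in> {1..n} \<and>
                 ((j < i \<and> i \<noteq> j + 1) \<or> j = i + 1)}"

end

theory Submission
  imports Defs
begin

text \<open>A set U of vertices of S_n induces an acyclic subdigraph iff it contains no three
  consecutive vertices i, i+1, i+2 (these form the directed triangle i \<rightarrow> i+1 \<rightarrow> i+2 \<rightarrow> i).
  Proper k-colourings of S_n are therefore exactly the words of length n over k letters with no
  three equal consecutive letters. Splitting such a word according to whether its first two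
  letters differ gives the recurrence a(n+3) = (k-1)(a(n+2) + a(n+1)), which is also satisfied
  by k times the Fibonacci-type polynomial \<Sum>i. C(i+1, n-i) (k-1)^i.\<close>

lemma acyclic_if_rank_decreasing:
  assumes "\<And>x y. (x, y) \<in> R \<Longrightarrow> f y < (f x :: nat)"
  shows "acyclic R"
proof -
  have "R\<inverse> \<subseteq> measure f" using assms by auto
  then have "wf (R\<inverse>)" using wf_measure wf_subset by blast
  then show ?thesis using wf_acyclic acyclic_converse by blast
qed

lemma acyclic_induced_S_arcs_iff:
  "acyclic (induced_arcs (S_arcs n) U) \<longleftrightarrow> (\<nexists>i. {i, i + 1, i + 2} \<subseteq> U \<inter> {1..n})"
proof
  assume acyc: "acyclic (induced_arcs (S_arcs n) U)"
  show "\<nexists>i. {i, i + 1, i + 2} \<subseteq> U \<inter> {1..n}"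
  proof
    assume "\<exists>i. {i, i + 1, i + 2} \<subseteq> U \<inter> {1..n}"
    then obtain i where "{i, i + 1, i + 2} \<subseteq> U \<inter> {1..n}" by blast
    then have "(i, i + 1) \<in> induced_arcs (S_arcs n) U" "(i + 1, i + 2) \<in> induced_arcs (S_arcs n) U"
        "(i + 2, i) \<in> induced_arcs (S_arcs n) U"
      by (auto simp: induced_arcs_def S_arcs_def)
    then have "(i, i) \<in> (induced_arcs (S_arcs n) U)\<^sup>+"
      by (meson trancl.simps)
    with acyc show False by (auto simp: acyclic_def)
  qed
next
  assume no_triple: "\<nexists>i. {i, i + 1, i + 2} \<subseteq> U \<inter> {1..n}"
  define W where "W = U \<inter> {1..n}"
  show "acyclic (induced_arcs (S_arcs n) U)"
  \<comment> \<open>Arcs either drop by at least 2 or are path arcs x \<rightarrow> x + 1 with x + 2 \<notin> W; the bonus 3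
    for vertices whose successor lies in W makes both kinds decrease the rank.\<close>
  proof (rule acyclic_if_rank_decreasing)
    fix x y assume "(x, y) \<in> induced_arcs (S_arcs n) U"
    then have "x \<in> W" "y \<in> W" "y + 2 \<le> x \<or> y = x + 1"
      by (auto simp: W_def induced_arcs_def S_arcs_def)
    moreover have "x + 2 \<notin> W" if "x \<in> W" "x + 1 \<in> W"
      using no_triple that unfolding W_def by (metis insert_subset empty_subsetI)
    ultimately consider "y + 2 \<le> x" | "y = x + 1" "x + 1 \<in> W" "x + 2 \<notin> W"
      by blast
    then show "2 * y + (if y + 1 \<in> W then 3 else 0) < 2 * x + (if x + 1 \<in> W then 3 else 0)"
    proof cases
      case 1
      then show ?thesis by simp
    next
      case 2
      then have "y + 1 \<notin> W" by simp
      with 2 show ?thesis by simp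
    qed
  qed
qed

lemma proper_coloring_S_arcs_iff:
  "proper_coloring {1..n} (S_arcs n) k c \<longleftrightarrow>
     c \<in> {1..n} \<rightarrow> {1..k} \<and>
     (\<forall>i. {i, i + 1, i + 2} \<subseteq> {1..n} \<longrightarrow> \<not> (c i = c (i + 1) \<and> c (i + 1) = c (i + 2)))"
proof -
  have "(\<forall>a\<in>{1..k}. \<nexists>i. {i, i + 1, i + 2} \<subseteq> {v \<in> {1..n}. c v = a} \<inter> {1..n}) \<longleftrightarrow>
        (\<forall>i. {i, i + 1, i + 2} \<subseteq> {1..n} \<longrightarrow> \<not> (c i = c (i + 1) \<and> c (i + 1) = c (i + 2)))"
    if "c \<in> {1..n} \<rightarrow> {1..k}"
  proof
    assume no_mono_triple:
      "\<forall>a\<in>{1..k}. \<nexists>i. {i, i + 1, i + 2} \<subseteq> {v \<in> {1..n}. c v = a} \<inter> {1..n}"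
    show "\<forall>i. {i, i + 1, i + 2} \<subseteq> {1..n} \<longrightarrow> \<not> (c i = c (i + 1) \<and> c (i + 1) = c (i + 2))"
    proof (intro allI impI notI)
      fix i assume i: "{i, i + 1, i + 2} \<subseteq> {1..n}" "c i = c (i + 1) \<and> c (i + 1) = c (i + 2)"
      then have "{i, i + 1, i + 2} \<subseteq> {v \<in> {1..n}. c v = c i} \<inter> {1..n}" by auto
      moreover have "c i \<in> {1..k}" using that i by auto
      ultimately show False using no_mono_triple by blast
    qed
  qed auto
  then show ?thesis
    unfolding proper_coloring_def acyclic_induced_S_arcs_iff by blast
qed

fun no_three_in_a_row :: "'a list \<Rightarrow> bool" where
  "no_three_in_a_row (a # b # c # xs) \<longleftrightarrow> \<not> (a = b \<and> b = c) \<and> no_three_in_a_row (b # c # xs)"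
| "no_three_in_a_row _ \<longleftrightarrow> True"

lemma no_three_in_a_row_iff_nth:
  "no_three_in_a_row xs \<longleftrightarrow>
     (\<forall>i. i + 2 < length xs \<longrightarrow> \<not> (xs ! i = xs ! (i + 1) \<and> xs ! (i + 1) = xs ! (i + 2)))"
proof (induction xs rule: no_three_in_a_row.induct)
  case (1 a b c xs)
  let ?xs = "a # b # c # xs"
  let ?Q = "\<lambda>i. i + 2 < length ?xs \<longrightarrow> \<not> (?xs ! i = ?xs ! (i + 1) \<and> ?xs ! (i + 1) = ?xs ! (i + 2))"
  have "(\<forall>i. ?Q i) \<longleftrightarrow> ?Q 0 \<and> (\<forall>i. ?Q (Suc i))"
    by (metis nat.exhaust)
  then show ?case using "1" by simp
qed (auto simp: less_Suc_eq)

lemma no_three_in_a_row_map_upt_iff: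
  "no_three_in_a_row (map c [1..<n + 1]) \<longleftrightarrow>
     (\<forall>i. {i, i + 1, i + 2} \<subseteq> {1..n} \<longrightarrow> \<not> (c i = c (i + 1) \<and> c (i + 1) = c (i + 2)))"
proof -
  let ?Q = "\<lambda>i. {i, i + 1, i + 2} \<subseteq> {1..n} \<longrightarrow> \<not> (c i = c (i + 1) \<and> c (i + 1) = c (i + 2))"
  have "(\<forall>i. ?Q i) \<longleftrightarrow> ?Q 0 \<and> (\<forall>i. ?Q (Suc i))"
    by (metis nat.exhaust)
  then show ?thesis
    unfolding no_three_in_a_row_iff_nth
    by (simp del: upt_Suc add: nth_append Suc_le_eq) (meson Suc_lessD)
qed

lemma bij_betw_map_upt_PiE:
  "bij_betw (\<lambda>c. map c [1..<n + 1]) ({1..n} \<rightarrow>\<^sub>E A) {xs. length xs = n \<and> set xs \<subseteq> A}"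
proof (rule bij_betw_byWitness[where f' = "\<lambda>xs. \<lambda>i \<in> {1..n}. xs ! (i - 1)"])
  show "\<forall>c \<in> {1..n} \<rightarrow>\<^sub>E A. (\<lambda>i \<in> {1..n}. map c [1..<n + 1] ! (i - 1)) = c"
  proof
    fix c assume "c \<in> {1..n} \<rightarrow>\<^sub>E A"
    moreover have "(\<lambda>i \<in> {1..n}. map c [1..<n + 1] ! (i - 1)) = restrict c {1..n}"
      by (rule restrict_ext) (auto simp del: upt_Suc)
    ultimately show "(\<lambda>i \<in> {1..n}. map c [1..<n + 1] ! (i - 1)) = c"
      by (simp add: PiE_restrict)
  qed
  show "\<forall>xs \<in> {xs. length xs = n \<and> set xs \<subseteq> A}. map (\<lambda>i \<in> {1..n}. xs ! (i - 1)) [1..<n + 1] = xs"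
    by (auto intro!: nth_equalityI simp del: upt_Suc)
  show "(\<lambda>c. map c [1..<n + 1]) ` ({1..n} \<rightarrow>\<^sub>E A) \<subseteq> {xs. length xs = n \<and> set xs \<subseteq> A}"
    by (auto simp: PiE_def Pi_def simp del: upt_Suc)
  show "(\<lambda>xs. \<lambda>i \<in> {1..n}. xs ! (i - 1)) ` {xs. length xs = n \<and> set xs \<subseteq> A} \<subseteq> {1..n} \<rightarrow>\<^sub>E A"
    by (auto simp: PiE_def Pi_def dest!: nth_mem)
qed

definition no_three_in_a_row_words :: "'a set \<Rightarrow> nat \<Rightarrow> 'a list set" where
  "no_three_in_a_row_words A n = {xs. length xs = n \<and> set xs \<subseteq> A \<and> no_three_in_a_row xs}"

lemma num_colorings_S_arcs_eq_card_words:
  "num_colorings {1..n} (S_arcs n) k = card (no_three_in_a_row_words {1..k} n)"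
proof -
  have "bij_betw (\<lambda>c. map c [1..<n + 1])
          {c \<in> {1..n} \<rightarrow>\<^sub>E {1..k}. proper_coloring {1..n} (S_arcs n) k c}
          {xs \<in> {xs. length xs = n \<and> set xs \<subseteq> {1..k}}. no_three_in_a_row xs}"
  proof (rule bij_betw_Collect[OF bij_betw_map_upt_PiE])
    fix c assume "c \<in> {1..n} \<rightarrow>\<^sub>E {1..k}"
    then show "no_three_in_a_row (map c [1..<n + 1]) \<longleftrightarrow> proper_coloring {1..n} (S_arcs n) k c"
      unfolding proper_coloring_S_arcs_iff no_three_in_a_row_map_upt_iff by (simp add: PiE_iff)
  qed
  then show ?thesis
    unfolding num_colorings_def no_three_in_a_row_words_def
    by (auto simp: bij_betw_same_card conj_assoc)
qed

lemma no_three_in_a_row_ConsD: "no_three_in_a_row (a # xs) \<Longrightarrow> no_three_in_a_row xs"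
  by (induction xs rule: no_three_in_a_row.induct) auto

lemma finite_no_three_in_a_row_words: "finite A \<Longrightarrow> finite (no_three_in_a_row_words A n)"
  by (rule finite_subset[OF _ finite_lists_length_eq[of A n]])
    (auto simp: no_three_in_a_row_words_def)

lemma card_no_three_in_a_row_words_le_2:
  assumes "finite A" "n \<le> 2"
  shows "card (no_three_in_a_row_words A n) = card A ^ n"
proof -
  have "no_three_in_a_row xs" if "length xs \<le> 2" for xs :: "'a list"
    using that by (cases xs rule: no_three_in_a_row.cases) auto
  then have "no_three_in_a_row_words A n = {xs. set xs \<subseteq> A \<and> length xs = n}"
    using assms(2) by (auto simp: no_three_in_a_row_words_def)
  then show ?thesis using assms(1) by (simp add: card_lists_length_eq)
qed

lemma no_three_in_a_row_words_Suc_Suc_Suc: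
  "no_three_in_a_row_words A (Suc (Suc (Suc n))) =
     (\<lambda>(ys, a). a # ys) ` (SIGMA ys : no_three_in_a_row_words A (Suc (Suc n)). A - {hd ys}) \<union>
     (\<lambda>(ys, a). a # a # ys) ` (SIGMA ys : no_three_in_a_row_words A (Suc n). A - {hd ys})"
  (is "?W = ?P \<union> ?Q")
proof
  show "?W \<subseteq> ?P \<union> ?Q"
  proof
    fix xs assume xs: "xs \<in> ?W"
    then obtain a b c zs where xs_eq: "xs = a # b # c # zs"
      by (auto simp: no_three_in_a_row_words_def length_Suc_conv)
    show "xs \<in> ?P \<union> ?Q"
    proof (cases "a = b")
      case False
      then have "(b # c # zs, a) \<in> (SIGMA ys : no_three_in_a_row_words A (Suc (Suc n)). A - {hd ys})"
        using xs xs_eq by (auto simp: no_three_in_a_row_words_def)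
      then show ?thesis using xs_eq by force
    next
      case True
      then have "(c # zs, a) \<in> (SIGMA ys : no_three_in_a_row_words A (Suc n). A - {hd ys})"
        using xs xs_eq by (auto simp: no_three_in_a_row_words_def dest: no_three_in_a_row_ConsD)
      then show ?thesis using xs_eq True by force
    qed
  qed
next
  have "no_three_in_a_row (a # b # zs) \<longleftrightarrow> no_three_in_a_row (b # zs)" if "a \<noteq> b" for a b :: 'a and zs
    using that by (cases zs) auto
  then show "?P \<union> ?Q \<subseteq> ?W"
    by (auto simp: no_three_in_a_row_words_def length_Suc_conv)
qed

lemma card_Sigma_Diff_hd:
  assumes "finite A"
  shows "card (SIGMA ys : no_three_in_a_row_words A (Suc n). A - {hd ys}) =
           (card A - 1) * card (no_three_in_a_row_words A (Suc n))"
proof -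
  have "hd ys \<in> A" if "ys \<in> no_three_in_a_row_words A (Suc n)" for ys
    using that by (auto simp: no_three_in_a_row_words_def length_Suc_conv)
  then show ?thesis
    using assms by (simp add: finite_no_three_in_a_row_words card_Diff_singleton)
qed

lemma card_no_three_in_a_row_words_Suc_Suc_Suc:
  assumes "finite A"
  shows "card (no_three_in_a_row_words A (Suc (Suc (Suc n)))) =
           (card A - 1) * (card (no_three_in_a_row_words A (Suc (Suc n))) +
                           card (no_three_in_a_row_words A (Suc n)))"
proof -
  have "inj_on (\<lambda>(ys, a). a # ys) X" "inj_on (\<lambda>(ys, a). a # a # ys) X" for X :: "('a list \<times> 'a) set"
    by (auto simp: inj_on_def)
  moreover have "(\<lambda>(ys, a). a # ys) ` (SIGMA ys : no_three_in_a_row_words A (Suc (Suc n)). A - {hd ys}) \<inter>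
      (\<lambda>(ys, a). a # a # ys) ` (SIGMA ys : no_three_in_a_row_words A (Suc n). A - {hd ys}) = {}"
    by (auto simp: no_three_in_a_row_words_def length_Suc_conv)
  ultimately show ?thesis
    using assms unfolding no_three_in_a_row_words_Suc_Suc_Suc
    by (simp add: card_Un_disjoint card_image card_Sigma_Diff_hd finite_no_three_in_a_row_words
        add_mult_distrib2 del: card_SigmaI)
qed

text \<open>For m = 1 this is the Fibonacci sequence: fib_poly 1 n = F(n + 2).\<close>

fun fib_poly :: "'a::comm_semiring_1 \<Rightarrow> nat \<Rightarrow> 'a" where
  "fib_poly m 0 = 1"
| "fib_poly m (Suc 0) = 1 + m"
| "fib_poly m (Suc (Suc n)) = m * (fib_poly m (Suc n) + fib_poly m n)"

lemma fib_poly_eq_binomial_sum: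
  "fib_poly m n = (\<Sum>i\<le>n. of_nat (Suc i choose (n - i)) * m ^ i)"
proof (induction m n rule: fib_poly.induct)
  case (3 m n)
  let ?S = "\<lambda>n. \<Sum>i\<le>n. of_nat (Suc i choose (n - i)) * m ^ i"
  let ?T = "\<Sum>i\<le>n. of_nat (Suc i choose Suc (n - i)) * m ^ i"
  have "?S (Suc (Suc n)) = (\<Sum>i\<le>Suc n. of_nat (Suc (Suc i) choose (Suc n - i)) * m ^ Suc i)"
    by (subst sum.atMost_Suc_shift) simp
  also have "\<dots> = (\<Sum>i\<le>n. of_nat (Suc (Suc i) choose Suc (n - i)) * m ^ Suc i) + m ^ Suc (Suc n)"
    by (simp add: Suc_diff_le)
  also have "\<dots> = m * ?S n + m * ?T + m ^ Suc (Suc n)"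
    by (simp add: sum.distrib sum_distrib_left algebra_simps)
  finally have "?S (Suc (Suc n)) = m * ?S n + m * ?T + m ^ Suc (Suc n)" .
  moreover have "?S (Suc n) = ?T + m ^ Suc n"
    by (simp add: Suc_diff_le)
  ultimately show ?case using "3" by (simp add: algebra_simps)
qed simp_all

lemma card_no_three_in_a_row_words:
  assumes "finite A"
  shows "card (no_three_in_a_row_words A (Suc n)) = card A * fib_poly (card A - 1) n"
proof (induction "card A - 1" n rule: fib_poly.induct)
  case 1
  show ?case using assms by (simp add: card_no_three_in_a_row_words_le_2)
next
  case 2
  show ?case
    using assms by (cases "card A") (simp_all add: card_no_three_in_a_row_words_le_2 power2_eq_square)
next
  case (3 n)
  then show ?case
    using assms by (simp add: card_no_three_in_a_row_words_Suc_Suc_Suc algebra_simps)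
qed

theorem mainTheorem9:
  fixes n k :: nat
  assumes "n \<ge> 1" and "k \<ge> 1"
  shows "int (num_colorings {1..n} (S_arcs n) k) =
           (\<Sum>i = 1..n. int (i choose (n - i)) * int k * (int k - 1) ^ (i - 1))"
proof -
  obtain N where N: "n = Suc N" using assms(1) by (cases n) auto
  have "num_colorings {1..n} (S_arcs n) k = k * fib_poly (k - 1) N"
    unfolding num_colorings_S_arcs_eq_card_words N
    by (simp add: card_no_three_in_a_row_words[OF finite_atLeastAtMost])
  also have "int \<dots> = int k * (\<Sum>i\<le>N. int (Suc i choose (N - i)) * (int k - 1) ^ i)"
    using assms(2) by (simp add: fib_poly_eq_binomial_sum of_nat_diff)
  also have "\<dots> = (\<Sum>i = 1..n. int (i choose (n - i)) * int k * (int k - 1) ^ (i - 1))"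
    unfolding N One_nat_def sum.shift_bounds_cl_Suc_ivl atMost_atLeast0
    by (simp add: sum_distrib_left algebra_simps)
  finally show ?thesis .
qed

end
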